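(* Let $H=\Bbbk^G\#\Bbbk F$ be as in the context with $G$ abelian, and assume the action of $F$ on $G$ is trivial: $g\triangleleft f=g$ for all $g\in G$, $f\in F$. Fix $f\in F$, let $V=\Bbbk v$ be a simple right $\Bbbk^{G_f}$-comodule with $\rho(v)=v\otimes\sum_{g\in G_f}a^gp_g$, and $\tilde V=(V\otimes\Bbbk f)\Box_{H'_f}H$ the induced right $H$-comodule. Let $V^*=\Bbbk v^*$ be the dual right $\Bbbk^{G_f}$-comodule, $\rho(v^* )=v^*\otimes\sum_{g\in G_f}a^gp_{g^{-1}}$. Then $G_{f^{-1}}=G_f$ and $\tilde V^*\cong(V^*\otimes\Bbbk f^{-1})\Box_{H'_{f^{-1}}}H$. Moreover, $\tilde V\cong\tilde V^*$ if and only if $V\cong V^*$ and $G_{f,f^{-1}}=\{g\in G\mid g\triangleright f=f^{-1}\}\neq\emptyset$.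
   Context: Setting: $\Bbbk$ algebraically closed of characteristic $0$, $F$ a group (possibly infinite), $G$ a finite abelian group, $(F,G,\triangleleft,\triangleright)$ a matched pair ($\triangleright:G\times F\to F$ a left action of $G$ on the set $F$, $\triangleleft:G\times F\to G$ a right action of $F$ on the set $G$, with $g\triangleright(ff')=(g\triangleright f)((g\triangleleft f)\triangleright f')$ and $(gg')\triangleleft f=(g\triangleleft(g'\triangleright f))(g'\triangleleft f)$). $H=\Bbbk^G\#\Bbbk F$ is the Hopf algebra with basis $\{p_g\#f\}$, product $(p_g\#f)(p_{g'}\#f')=\delta_{g\triangleleft f,g'}p_g\#ff'$, unit $\sum_gp_g\#1_F$, coproduct $\Delta(p_g\#f)=\sum_{x\in G}p_{gx^{-1}}\#(x\triangleright f)\otimes p_x\#f$, counit $\varepsilon(p_g\#f)=\delta_{g,1_G}$, antipode $S(p_g\#f)=p_{(g\triangleleft f)^{-1}}\#(g\triangleright f)^{-1}$. For $e\in F$: $G_e=\{g\in G\mid g\triangleright e=e\}$; $H'_e$ is the coalgebra with basis $\{p_g\#f'\mid g\in G_e,f'\in F\}$, $\Delta(p_g\#f')=\sum_{x\in G_e}p_{gx^{-1}}\#(x\triangleright f')\otimes p_x\#f'$, $\varepsilon(p_g\#f')=\delta_{g,1_G}$; $H$ is a left $H'_e$-comodule via $(\pi_e\otimes\mathrm{id})\Delta$ ($\pi_e$ kills $p_g\#f'$, $g\notin G_e$). For a right $\Bbbk^{G_e}$-comodule $U$ with $\rho(u)=\sum_{g\in G_e}u_g\otimes p_g$, $U\otimes\Bbbk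 e$ is a right $H'_e$-comodule via $u\otimes e\mapsto\sum_gu_g\otimes e\otimes p_g\#e$, and $(U\otimes\Bbbk e)\Box_{H'_e}H$ (cotensor product) is the induced right $H$-comodule with coaction $\mathrm{id}\otimes\Delta$. $\tilde V^*$ is the dual right $H$-comodule. *)

theory Defs
  imports "HOL-Computational_Algebra.Polynomial"
begin

text \<open>Groups are written additively: G is a type 'g of class
  ab_group_add (and finite), F is a type 'f of class group_add (possibly
  non-commutative, possibly infinite).  So gg' is g + g', g^{-1} is -g, 1 is 0.
  lt g f is g |> f (left action of G on F), rt g f is g <| f (right action of F on G).
  Vector spaces are subspaces of function spaces 'x => 'k with pointwise operations.
  The basis element p_g # f of H is indexed by the pair (g,f).\<close>

definition matched_pair :: "('g::group_add \<Rightarrow> 'f::group_add \<Rightarrow> 'f) \<Rightarrow> ('g \<Rightarrow> 'f \<Rightarrow> 'g) \<Rightarrow> bool" where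
  "matched_pair lt rt \<longleftrightarrow>
     (\<forall>f. lt 0 f = f) \<and> (\<forall>g g' f. lt (g + g') f = lt g (lt g' f)) \<and>
     (\<forall>g. rt g 0 = g) \<and> (\<forall>g f f'. rt g (f + f') = rt (rt g f) f') \<and>
     (\<forall>g f f'. lt g (f + f') = lt g f + lt (rt g f) f') \<and>
     (\<forall>g g' f. rt (g + g') f = rt g (lt g' f) + rt g' f)"

definition stab :: "('g \<Rightarrow> 'f \<Rightarrow> 'f) \<Rightarrow> 'f \<Rightarrow> 'g set" where
  "stab lt e = {g. lt g e = e}"

definition vzero :: "'x \<Rightarrow> 'k::field" where "vzero = (\<lambda>_. 0)"
definition vadd :: "('x \<Rightarrow> 'k::field) \<Rightarrow> ('x \<Rightarrow> 'k) \<Rightarrow> ('x \<Rightarrow> 'k)" where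
  "vadd u v = (\<lambda>x. u x + v x)"
definition vsc :: "'k::field \<Rightarrow> ('x \<Rightarrow> 'k) \<Rightarrow> ('x \<Rightarrow> 'k)" where
  "vsc c v = (\<lambda>x. c * v x)"

definition linear_on :: "('x \<Rightarrow> 'k::field) set \<Rightarrow> (('x \<Rightarrow> 'k) \<Rightarrow> ('y \<Rightarrow> 'k)) \<Rightarrow> bool" where
  "linear_on M T \<longleftrightarrow> (\<forall>u\<in>M. \<forall>v\<in>M. T (vadd u v) = vadd (T u) (T v)) \<and>
                      (\<forall>c. \<forall>u\<in>M. T (vsc c u) = vsc c (T u))"

definition functional_on :: "('x \<Rightarrow> 'k::field) set \<Rightarrow> (('x \<Rightarrow> 'k) \<Rightarrow> 'k) \<Rightarrow> bool" where
  "functional_on M \<phi> \<longleftrightarrow> (\<forall>u\<in>M. \<forall>v\<in>M. \<phi> (vadd u v) = \<phi> u + \<phi> v) \<and>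
                          (\<forall>c. \<forall>u\<in>M. \<phi> (vsc c u) = c * \<phi> u)"

definition dual_space :: "('x \<Rightarrow> 'k::field) set \<Rightarrow> (('x \<Rightarrow> 'k) \<Rightarrow> 'k) set" where
  "dual_space M = {\<phi>. functional_on M \<phi> \<and> (\<forall>m. m \<notin> M \<longrightarrow> \<phi> m = 0)}"

text \<open>A right comodule over a coalgebra with basis indexed by 'b is given by a space M
  and a coaction c, where c m b is the component of rho(m) at the basis element b,
  i.e. rho(m) = sum_b c m b (x) b.\<close>
definition comod_iso ::
  "('x \<Rightarrow> 'k::field) set \<Rightarrow> (('x \<Rightarrow> 'k) \<Rightarrow> 'b \<Rightarrow> ('x \<Rightarrow> 'k)) \<Rightarrow>
   ('y \<Rightarrow> 'k) set \<Rightarrow> (('y \<Rightarrow> 'k) \<Rightarrow> 'b \<Rightarrow> ('y \<Rightarrow> 'k)) \<Rightarrow> bool" where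
  "comod_iso M c N d \<longleftrightarrow>
     (\<exists>T. linear_on M T \<and> bij_betw T M N \<and> (\<forall>m\<in>M. \<forall>b. d (T m) b = T (c m b)))"

text \<open>Right comodules over the function algebra k^K (basis p_g, g in K, K a subgroup of G):
  Delta(p_g) = sum_{x in K} p_{g x^{-1}} (x) p_x, eps(p_g) = delta_{g,1}.\<close>
definition is_kK_comod :: "'g::ab_group_add set \<Rightarrow> ('x \<Rightarrow> 'k::field) set \<Rightarrow> (('x \<Rightarrow> 'k) \<Rightarrow> 'g \<Rightarrow> ('x \<Rightarrow> 'k)) \<Rightarrow> bool" where
  "is_kK_comod K M \<rho> \<longleftrightarrow>
     vzero \<in> M \<and> (\<forall>u\<in>M. \<forall>v\<in>M. vadd u v \<in> M) \<and> (\<forall>c. \<forall>u\<in>M. vsc c u \<in> M) \<and>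
     (\<forall>m\<in>M. \<forall>g. \<rho> m g \<in> M) \<and> (\<forall>m\<in>M. \<forall>g. g \<notin> K \<longrightarrow> \<rho> m g = vzero) \<and>
     (\<forall>g. linear_on M (\<lambda>m. \<rho> m g)) \<and>
     (\<forall>m\<in>M. \<forall>h\<in>K. \<forall>x\<in>K. \<rho> (\<rho> m x) h = \<rho> m (h + x)) \<and>
     (\<forall>m\<in>M. \<rho> m 0 = m)"

text \<open>One-dimensional k^K-comodule kv (represented as unit => k) with
  rho(v) = v (x) sum_{g in K} a^g p_g.\<close>
definition char_coact :: "'g set \<Rightarrow> ('g \<Rightarrow> 'k::field) \<Rightarrow> (unit \<Rightarrow> 'k) \<Rightarrow> 'g \<Rightarrow> (unit \<Rightarrow> 'k)" where
  "char_coact K a v g = (if g \<in> K then vsc (a g) v else vzero)"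

text \<open>Coefficient of p_{g1}#f1 (x) p_{g2}#f2 in Delta(p_g#f) = sum_x p_{g x^{-1}}#(x |> f) (x) p_x#f.\<close>
definition Delta_coef :: "('g::ab_group_add \<Rightarrow> 'f \<Rightarrow> 'f) \<Rightarrow> 'g \<times> 'f \<Rightarrow> ('g \<times> 'f) \<times> ('g \<times> 'f) \<Rightarrow> 'k::field" where
  "Delta_coef lt b bb = (case b of (g, f) \<Rightarrow> case bb of ((g1, f1), (g2, f2)) \<Rightarrow>
      if g1 = g - g2 \<and> f1 = lt g2 f \<and> f2 = f then 1 else 0)"

text \<open>Coefficient of p_{g1}#f1 (x) p_{g2}#f2 in the left H'_e-coaction (pi_e (x) id) Delta(p_g#f).\<close>
definition lam_coef :: "('g::ab_group_add \<Rightarrow> 'f \<Rightarrow> 'f) \<Rightarrow> 'f \<Rightarrow> 'g \<times> 'f \<Rightarrow> ('g \<times> 'f) \<times> ('g \<times> 'f) \<Rightarrow> 'k::field" where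
  "lam_coef lt e b bb = (if fst (fst bb) \<in> stab lt e then Delta_coef lt b bb else 0)"

text \<open>S(p_g#f) = p_{(g <| f)^{-1}} # (g |> f)^{-1}: index map on the basis.\<close>
definition antipode_idx :: "('g::group_add \<Rightarrow> 'f::group_add \<Rightarrow> 'f) \<Rightarrow> ('g \<Rightarrow> 'f \<Rightarrow> 'g) \<Rightarrow> 'g \<times> 'f \<Rightarrow> 'g \<times> 'f" where
  "antipode_idx lt rt b = (case b of (g, f) \<Rightarrow> (- rt g f, - lt g f))"

text \<open>Dual right H-comodule: rho(phi) = sum_b' phi_b' (x) b' where
  sum_b' phi_b'(m) b' = sum_b phi(m_b) S(b).\<close>
definition dual_coact ::
  "('g::group_add \<Rightarrow> 'f::group_add \<Rightarrow> 'f) \<Rightarrow> ('g \<Rightarrow> 'f \<Rightarrow> 'g) \<Rightarrow> ('x \<Rightarrow> 'k::field) set \<Rightarrow>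
   (('x \<Rightarrow> 'k) \<Rightarrow> 'g \<times> 'f \<Rightarrow> ('x \<Rightarrow> 'k)) \<Rightarrow>
   (('x \<Rightarrow> 'k) \<Rightarrow> 'k) \<Rightarrow> 'g \<times> 'f \<Rightarrow> (('x \<Rightarrow> 'k) \<Rightarrow> 'k)" where
  "dual_coact lt rt M c \<phi> b' =
     (\<lambda>m. if m \<in> M then (\<Sum>b | antipode_idx lt rt b = b' \<and> c m b \<noteq> vzero. \<phi> (c m b)) else 0)"

text \<open>U = kv with rho(v) = v (x) sum_{g in G_e} a^g p_g.  An element of (U (x) ke) (x) H is
  sum_{(g,f)} X(g,f) v (x) e (x) p_g#f, represented by the finitely supported X.
  Elements of (U (x) ke) (x) H'_e (x) H are represented by their coefficient at
  v (x) e (x) p_h#b (x) p_y#f'.  The cotensor product is the equaliser of rho (x) id and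
  id (x) lambda.\<close>

definition rho_id_coef :: "('g \<Rightarrow> 'f \<Rightarrow> 'f) \<Rightarrow> 'f \<Rightarrow> ('g \<Rightarrow> 'k::field) \<Rightarrow> ('g \<times> 'f \<Rightarrow> 'k) \<Rightarrow> ('g \<times> 'f) \<times> ('g \<times> 'f) \<Rightarrow> 'k" where
  "rho_id_coef lt e a X bb = (case bb of ((h, b), (y, f')) \<Rightarrow>
      if h \<in> stab lt e \<and> b = e then a h * X (y, f') else 0)"

definition id_lam_coef :: "('g::ab_group_add \<Rightarrow> 'f \<Rightarrow> 'f) \<Rightarrow> 'f \<Rightarrow> ('g \<times> 'f \<Rightarrow> 'k::field) \<Rightarrow> ('g \<times> 'f) \<times> ('g \<times> 'f) \<Rightarrow> 'k" where
  "id_lam_coef lt e X bb = (\<Sum>b | X b \<noteq> 0. X b * lam_coef lt e b bb)"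

definition induced :: "('g::ab_group_add \<Rightarrow> 'f \<Rightarrow> 'f) \<Rightarrow> 'f \<Rightarrow> ('g \<Rightarrow> 'k::field) \<Rightarrow> ('g \<times> 'f \<Rightarrow> 'k) set" where
  "induced lt e a = {X. finite {b. X b \<noteq> 0} \<and> rho_id_coef lt e a X = id_lam_coef lt e X}"

text \<open>Coaction id (x) Delta on the induced comodule: component at the basis element b2.\<close>
definition ind_coact :: "('g::ab_group_add \<Rightarrow> 'f \<Rightarrow> 'f) \<Rightarrow> ('g \<times> 'f \<Rightarrow> 'k::field) \<Rightarrow> 'g \<times> 'f \<Rightarrow> ('g \<times> 'f \<Rightarrow> 'k)" where
  "ind_coact lt X b2 = (\<lambda>b1. \<Sum>b | X b \<noteq> 0. X b * Delta_coef lt b (b1, b2))"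

end

theory Submission
  imports Defs
begin

text \<open>With the right action trivial, G acts on F by group automorphisms. Unwinding the cotensor
  product, the comodule induced from (e, b) consists of the functions X on G \<times> F supported on
  {(y, x). y |> x = e} with X (h + y, x) = b h * X (y, x) for h in G_e, and the b-twisted
  G_e-averages of the basis elements span it. Evaluating a functional on these spanning elements
  identifies the dual of the comodule induced from (f, a) with the one induced from
  (-f, a o uminus); the inverse comes from a perfect pairing.

  The comodules induced from (e, a) and (e', b) are isomorphic iff e' = g |> e for some g and
  a = b on G_e: an isomorphism sends the coaction component at (0, e) of a spanning element to a
  nonzero vector, whose support forces e' into the orbit of e, and comparing the components at
  (h, e) for h in G_e compares the characters; conversely, translation by g is an isomorphism.\<close>

lemma linear_on_vzero:
  assumes "linear_on M T" "vzero \<in> M"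
  shows "T vzero = vzero"
proof -
  have "T vzero = T (vsc 0 vzero)" by (simp add: vsc_def vzero_def)
  also have "\<dots> = vsc 0 (T vzero)" using assms unfolding linear_on_def by blast
  also have "\<dots> = vzero" by (simp add: vsc_def vzero_def)
  finally show ?thesis .
qed

lemma functional_on_vzero:
  assumes "functional_on M \<phi>" "vzero \<in> M"
  shows "\<phi> vzero = 0"
proof -
  have "\<phi> vzero = \<phi> (vsc 0 vzero)" by (simp add: vsc_def vzero_def)
  also have "\<dots> = 0" using assms unfolding functional_on_def by simp
  finally show ?thesis .
qed

lemma functional_on_sum:
  assumes \<phi>: "functional_on M \<phi>" and zero: "vzero \<in> M"
    and add: "\<forall>u\<in>M. \<forall>v\<in>M. vadd u v \<in> M" and scale: "\<forall>c. \<forall>u\<in>M. vsc c u \<in> M"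
    and "finite A" and "\<forall>g\<in>A. u g \<in> M"
  shows "(\<lambda>p. \<Sum>g\<in>A. c g * u g p) \<in> M \<and> \<phi> (\<lambda>p. \<Sum>g\<in>A. c g * u g p) = (\<Sum>g\<in>A. c g * \<phi> (u g))"
  using \<open>finite A\<close> \<open>\<forall>g\<in>A. u g \<in> M\<close>
proof (induction A rule: finite_induct)
  case empty
  then show ?case
    using zero functional_on_vzero[OF \<phi> zero] by (simp add: vzero_def[symmetric])
next
  case (insert x A)
  have "(\<lambda>p. \<Sum>g\<in>insert x A. c g * u g p) = vadd (vsc (c x) (u x)) (\<lambda>p. \<Sum>g\<in>A. c g * u g p)"
    using insert by (simp add: vadd_def vsc_def)
  moreover have "vsc (c x) (u x) \<in> M" using scale insert by simp
  ultimately show ?case using add \<phi> insert unfolding functional_on_def by simp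
qed

lemma linear_bij_nonzero:
  assumes "linear_on M T" "vzero \<in> M" "bij_betw T M N" "m \<in> M" "m \<noteq> vzero"
  shows "T m \<noteq> vzero"
  using assms linear_on_vzero[OF assms(1,2)] by (metis bij_betw_inv_into_left)

lemma vsc_right_cancel:
  assumes "vsc (c :: 'k::field) w = vsc d w" "w \<noteq> vzero"
  shows "c = d"
proof -
  obtain p where "w p \<noteq> 0" using assms(2) by (auto simp: vzero_def fun_eq_iff)
  moreover have "c * w p = d * w p" using assms(1) by (auto simp: vsc_def fun_eq_iff)
  ultimately show ?thesis by simp
qed

lemma dual_space_vadd:
  "\<phi> \<in> dual_space M \<Longrightarrow> \<psi> \<in> dual_space M \<Longrightarrow> vadd \<phi> \<psi> \<in> dual_space M"
  by (auto simp: dual_space_def functional_on_def vadd_def distrib_left)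

lemma dual_space_vsc: "\<phi> \<in> dual_space M \<Longrightarrow> vsc c \<phi> \<in> dual_space M"
  by (auto simp: dual_space_def functional_on_def vsc_def mult.left_commute distrib_left)

lemma comod_iso_trans:
  assumes "comod_iso M c N d" "comod_iso N d P e"
  shows "comod_iso M c P e"
proof -
  obtain T where T: "linear_on M T" "bij_betw T M N" "\<forall>m\<in>M. \<forall>b. d (T m) b = T (c m b)"
    using assms(1) unfolding comod_iso_def by blast
  obtain U where U: "linear_on N U" "bij_betw U N P" "\<forall>n\<in>N. \<forall>b. e (U n) b = U (d n b)"
    using assms(2) unfolding comod_iso_def by blast
  have TM: "T m \<in> N" if "m \<in> M" for m using T(2) that by (auto simp: bij_betw_def)
  have "linear_on M (U \<circ> T)" using T(1) U(1) TM unfolding linear_on_def by simp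
  moreover have "bij_betw (U \<circ> T) M P" using T(2) U(2) by (rule bij_betw_trans)
  moreover have "\<forall>m\<in>M. \<forall>b. e ((U \<circ> T) m) b = (U \<circ> T) (c m b)" using T(3) U(3) TM by simp
  ultimately show ?thesis unfolding comod_iso_def by blast
qed

lemma comod_iso_sym:
  assumes "comod_iso M c N d"
    and closed: "\<forall>u\<in>M. \<forall>v\<in>M. vadd u v \<in> M" "\<forall>k. \<forall>u\<in>M. vsc k u \<in> M" "\<forall>m\<in>M. \<forall>b. c m b \<in> M"
  shows "comod_iso N d M c"
proof -
  obtain T where T: "linear_on M T" "bij_betw T M N" "\<forall>m\<in>M. \<forall>b. d (T m) b = T (c m b)"
    using assms(1) unfolding comod_iso_def by blast
  define U where "U = inv_into M T"
  have U: "bij_betw U N M" unfolding U_def by (rule bij_betw_inv_into[OF T(2)])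
  have UM: "U n \<in> M" if "n \<in> N" for n using U that by (auto simp: bij_betw_def)
  have TU: "T (U n) = n" if "n \<in> N" for n
    using T(2) that unfolding U_def by (simp add: bij_betw_inv_into_right)
  have UT: "U (T m) = m" if "m \<in> M" for m
    using T(2) that unfolding U_def by (simp add: bij_betw_inv_into_left)
  have "linear_on N U"
    unfolding linear_on_def
  proof (intro conjI ballI allI)
    fix u v assume "u \<in> N" "v \<in> N"
    then have "vadd u v = T (vadd (U u) (U v))" using T(1) UM TU unfolding linear_on_def by simp
    then show "U (vadd u v) = vadd (U u) (U v)" using UT closed(1) UM \<open>u \<in> N\<close> \<open>v \<in> N\<close> by simp
  next
    fix k u assume "u \<in> N"
    then have "vsc k u = T (vsc k (U u))" using T(1) UM TU unfolding linear_on_def by simp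
    then show "U (vsc k u) = vsc k (U u)" using UT closed(2) UM \<open>u \<in> N\<close> by simp
  qed
  moreover have "c (U n) b = U (d n b)" if n: "n \<in> N" for n b
  proof -
    have "d n b = T (c (U n) b)" using T(3) UM[OF n] TU[OF n] by metis
    then show ?thesis using UT closed(3) UM[OF n] by simp
  qed
  ultimately show ?thesis using U unfolding comod_iso_def by blast
qed

lemma comod_iso_char_coact_iff:
  "comod_iso (UNIV :: (unit \<Rightarrow> 'k::field) set) (char_coact K a) UNIV (char_coact K b)
     \<longleftrightarrow> (\<forall>h\<in>K. a h = b h)"
proof
  assume "comod_iso (UNIV :: (unit \<Rightarrow> 'k) set) (char_coact K a) UNIV (char_coact K b)"
  then obtain T where T: "linear_on (UNIV :: (unit \<Rightarrow> 'k) set) T" "bij_betw T UNIV (UNIV :: (unit \<Rightarrow> 'k) set)"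
    "\<forall>m b'. char_coact K b (T m) b' = T (char_coact K a m b')"
    unfolding comod_iso_def by blast
  let ?v = "(\<lambda>_. 1) :: unit \<Rightarrow> 'k"
  have nonzero: "T ?v \<noteq> vzero"
    by (rule linear_bij_nonzero[OF T(1) _ T(2)]) (auto simp: vzero_def fun_eq_iff)
  show "\<forall>h\<in>K. a h = b h"
  proof
    fix h assume "h \<in> K"
    then have "vsc (b h) (T ?v) = T (vsc (a h) ?v)" using T(3) by (metis char_coact_def)
    also have "\<dots> = vsc (a h) (T ?v)" using T(1) unfolding linear_on_def by blast
    finally show "a h = b h" using vsc_right_cancel nonzero by metis
  qed
next
  assume "\<forall>h\<in>K. a h = b h"
  then show "comod_iso (UNIV :: (unit \<Rightarrow> 'k) set) (char_coact K a) UNIV (char_coact K b)"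
    unfolding comod_iso_def by (intro exI[of _ id]) (auto simp: linear_on_def char_coact_def)
qed

definition character_on :: "'g::monoid_add set \<Rightarrow> ('g \<Rightarrow> 'k::field) \<Rightarrow> bool" where
  "character_on K a \<longleftrightarrow> a 0 = 1 \<and> (\<forall>h\<in>K. \<forall>x\<in>K. a (h + x) = a h * a x)"

lemma character_on_char_coact:
  assumes "is_kK_comod K (UNIV :: (unit \<Rightarrow> 'k::field) set) (char_coact K a)"
    and "0 \<in> K" and "\<forall>h\<in>K. \<forall>x\<in>K. h + x \<in> K"
  shows "character_on K a"
proof -
  let ?v = "(\<lambda>_. 1) :: unit \<Rightarrow> 'k"
  have "char_coact K a ?v 0 = ?v"
    and "\<forall>h\<in>K. \<forall>x\<in>K. char_coact K a (char_coact K a ?v x) h = char_coact K a ?v (h + x)"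
    using assms(1) unfolding is_kK_comod_def by blast+
  then show ?thesis
    using assms(2,3) unfolding character_on_def by (simp add: char_coact_def vsc_def fun_eq_iff)
qed

lemma character_on_zero: "character_on K a \<Longrightarrow> a 0 = 1"
  by (simp add: character_on_def)

lemma character_on_uminus:
  fixes a :: "'g::ab_group_add \<Rightarrow> 'k::field"
  assumes "character_on K a" "\<forall>h\<in>K. - h \<in> K"
  shows "character_on K (\<lambda>g. a (- g))"
  unfolding character_on_def
proof (intro conjI ballI)
  fix h x assume "h \<in> K" "x \<in> K"
  then have "a (- h + - x) = a (- h) * a (- x)" using assms unfolding character_on_def by blast
  then show "a (- (h + x)) = a (- h) * a (- x)" by (simp add: add.commute)
qed (use assms in \<open>simp add: character_on_def\<close>)

section \<open>The induced comodule\<close>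

lemma card_preimage_diff_left: "card {g. x - g \<in> S} = card (S :: 'g::ab_group_add set)"
proof -
  have "{g. x - g \<in> S} = (\<lambda>h. x - h) ` S" by (force simp: image_def)
  then show ?thesis by (simp add: card_image inj_on_def)
qed

lemma card_preimage_diff_right: "card {y. y - g \<in> S} = card (S :: 'g::ab_group_add set)"
proof -
  have "{y. y - g \<in> S} = (\<lambda>h. h + g) ` S" by (force simp: image_def)
  then show ?thesis by (simp add: card_image inj_on_def)
qed

locale trivial_right_action =
  fixes lt :: "'g::{ab_group_add, finite} \<Rightarrow> 'f::group_add \<Rightarrow> 'f"
    and rt :: "'g \<Rightarrow> 'f \<Rightarrow> 'g"
  assumes matched_pair: "matched_pair lt rt"
    and rt_trivial: "rt g x = g"
begin

lemma act_zero [simp]: "lt 0 x = x"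
  using matched_pair by (simp add: matched_pair_def)

lemma act_act [simp]: "lt g (lt h x) = lt (g + h) x"
  using matched_pair by (simp add: matched_pair_def)

lemma act_plus: "lt g (x + y) = lt g x + lt g y"
  using matched_pair rt_trivial by (simp add: matched_pair_def)

lemma act_zero_right [simp]: "lt g 0 = 0"
proof -
  have "lt g 0 + lt g 0 = lt g 0 + 0" using act_plus[of g 0 0] by simp
  then show ?thesis by (rule add_left_imp_eq)
qed

lemma act_uminus [simp]: "lt g (- x) = - lt g x"
  using act_plus[of g "- x" x] by (simp add: eq_neg_iff_add_eq_0)

lemma act_eq_iff: "lt g x = y \<longleftrightarrow> x = lt (- g) y"
  by auto

lemma act_inject [simp]: "lt g x = lt g y \<longleftrightarrow> x = y"
  by (simp add: act_eq_iff)

lemma zero_mem_stab [simp]: "0 \<in> stab lt e"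
  by (simp add: stab_def)

lemma add_mem_stab: "h \<in> stab lt e \<Longrightarrow> x \<in> stab lt e \<Longrightarrow> h + x \<in> stab lt e"
  by (simp add: stab_def flip: act_act)

lemma uminus_mem_stab_iff [simp]: "- h \<in> stab lt e \<longleftrightarrow> h \<in> stab lt e"
  using act_eq_iff[of h e e] act_eq_iff[of "- h" e e] by (auto simp: stab_def)

lemma add_mem_stab_iff: "h \<in> stab lt e \<Longrightarrow> h + x \<in> stab lt e \<longleftrightarrow> x \<in> stab lt e"
  using add_mem_stab[of "- h" e "h + x"] add_mem_stab[of h e x] by auto

lemma stab_uminus [simp]: "stab lt (- e) = stab lt e"
  by (auto simp: stab_def)

lemma stab_act: "stab lt (lt g e) = stab lt e"
proof -
  have "lt h (lt g e) = lt g e \<longleftrightarrow> lt h e = e" for h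
    using act_inject[of g "lt h e" e] by (simp add: add.commute)
  then show ?thesis by (simp add: stab_def)
qed

lemma act_eq_if_diff_mem_stab: "g - g' \<in> stab lt e \<Longrightarrow> lt g e = lt g' e"
  using act_act[of g' "g - g'" e] by (simp add: stab_def add.commute)

lemma act_add_stab_eq_iff: "h \<in> stab lt e \<Longrightarrow> lt (h + y) x = e \<longleftrightarrow> lt y x = e"
  using act_act[of h y x] act_eq_iff[of h "lt y x" e] uminus_mem_stab_iff[of h e]
  by (auto simp: stab_def)

definition induced_fun :: "'f \<Rightarrow> ('g \<Rightarrow> 'k::field) \<Rightarrow> ('g \<times> 'f \<Rightarrow> 'k) \<Rightarrow> bool" where
  "induced_fun e b X \<longleftrightarrow> (\<forall>y x. X (y, x) \<noteq> 0 \<longrightarrow> lt y x = e) \<and>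
     (\<forall>h\<in>stab lt e. \<forall>y x. X (h + y, x) = b h * X (y, x))"

lemma induced_fun_support: "induced_fun e b X \<Longrightarrow> X (y, x) \<noteq> 0 \<Longrightarrow> lt y x = e"
  by (simp add: induced_fun_def)

lemma induced_fun_equivariant:
  "induced_fun e b X \<Longrightarrow> h \<in> stab lt e \<Longrightarrow> X (h + y, x) = b h * X (y, x)"
  by (simp add: induced_fun_def)

lemma induced_fun_finite_support:
  assumes "induced_fun e b X"
  shows "finite {p. X p \<noteq> 0}"
proof (rule finite_subset)
  show "{p. X p \<noteq> 0} \<subseteq> range (\<lambda>y. (y, lt (- y) e))"
    using induced_fun_support[OF assms] by (force simp: act_eq_iff)
qed simp

lemma id_lam_coef_eq:
  assumes "finite {p. X p \<noteq> 0}"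
  shows "id_lam_coef lt e X ((h, z), (y, x)) =
     (if h \<in> stab lt e \<and> z = lt y x then X (h + y, x) else 0)"
proof -
  have "id_lam_coef lt e X ((h, z), (y, x)) = (\<Sum>p\<in>{p. X p \<noteq> 0}.
      if p = (h + y, x) then (if h \<in> stab lt e \<and> z = lt y x then X (h + y, x) else 0) else 0)"
    unfolding id_lam_coef_def
    by (rule sum.cong) (auto simp: lam_coef_def Delta_coef_def eq_diff_eq split: if_splits)
  also have "\<dots> = (if h \<in> stab lt e \<and> z = lt y x then X (h + y, x) else 0)"
    using assms by (subst sum.delta) auto
  finally show ?thesis .
qed

lemma ind_coact_eq:
  assumes "finite {p. X p \<noteq> 0}"
  shows "ind_coact lt X (g, z) = (\<lambda>(y, x). if x = lt g z then X (y + g, z) else 0)"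
proof (intro ext, clarify)
  fix y x
  have "ind_coact lt X (g, z) (y, x) =
     (\<Sum>p\<in>{p. X p \<noteq> 0}. if p = (y + g, z) then (if x = lt g z then X (y + g, z) else 0) else 0)"
    unfolding ind_coact_def by (rule sum.cong) (auto simp: Delta_coef_def eq_diff_eq split: if_splits)
  also have "\<dots> = (if x = lt g z then X (y + g, z) else 0)"
    using assms by (subst sum.delta) auto
  finally show "ind_coact lt X (g, z) (y, x) = (if x = lt g z then X (y + g, z) else 0)" .
qed

lemma mem_induced_iff_coefs:
  assumes "finite {p. X p \<noteq> 0}"
  shows "X \<in> induced lt e b \<longleftrightarrow> (\<forall>h z y x.
    (if h \<in> stab lt e \<and> z = e then b h * X (y, x) else 0) =
    (if h \<in> stab lt e \<and> z = lt y x then X (h + y, x) else 0))"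
  using assms by (simp add: induced_def fun_eq_iff rho_id_coef_def id_lam_coef_eq)

lemma mem_induced_iff:
  assumes "b 0 = 1"
  shows "X \<in> induced lt e b \<longleftrightarrow> induced_fun e b X"
proof
  assume X: "X \<in> induced lt e b"
  then have "finite {p. X p \<noteq> 0}" by (simp add: induced_def)
  with X have eq: "(if h \<in> stab lt e \<and> z = e then b h * X (y, x) else 0) =
      (if h \<in> stab lt e \<and> z = lt y x then X (h + y, x) else 0)" for h z y x
    using mem_induced_iff_coefs by blast
  have support: "lt y x = e" if "X (y, x) \<noteq> 0" for y x
  proof (rule ccontr)
    assume "lt y x \<noteq> e"
    then have "b 0 * X (y, x) = 0" using eq[of 0 e y x] by simp
    then show False using that assms by simp
  qed
  have "X (h + y, x) = b h * X (y, x)" if h: "h \<in> stab lt e" for h y x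
  proof (cases "lt y x = e")
    case True
    then show ?thesis using eq[of h e y x] h by simp
  next
    case False
    then have "X (y, x) = 0" "X (h + y, x) = 0"
      using support[of y x] support[of "h + y" x] act_add_stab_eq_iff[OF h] by auto
    then show ?thesis by simp
  qed
  with support show "induced_fun e b X" by (simp add: induced_fun_def)
next
  assume X: "induced_fun e b X"
  have "(if h \<in> stab lt e \<and> z = e then b h * X (y, x) else 0) =
      (if h \<in> stab lt e \<and> z = lt y x then X (h + y, x) else 0)" for h z y x
  proof (cases "h \<in> stab lt e \<and> lt y x = e")
    case True
    then show ?thesis using induced_fun_equivariant[OF X, of h y x] by auto
  next
    case False
    then have "X (y, x) = 0 \<or> h \<notin> stab lt e" and "X (h + y, x) = 0 \<or> h \<notin> stab lt e"
      using induced_fun_support[OF X] act_add_stab_eq_iff[of h e y x] by blast+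
    then show ?thesis by auto
  qed
  then show "X \<in> induced lt e b"
    using mem_induced_iff_coefs[OF induced_fun_finite_support[OF X]] by blast
qed

lemma character_mem_induced_iff:
  "character_on (stab lt e) b \<Longrightarrow> X \<in> induced lt e b \<longleftrightarrow> induced_fun e b X"
  by (rule mem_induced_iff) (simp add: character_on_def)

lemma induced_closed:
  assumes "b 0 = 1"
  shows "vzero \<in> induced lt e b"
    and "u \<in> induced lt e b \<Longrightarrow> v \<in> induced lt e b \<Longrightarrow> vadd u v \<in> induced lt e b"
    and "u \<in> induced lt e b \<Longrightarrow> vsc c u \<in> induced lt e b"
    and "u \<in> induced lt e b \<Longrightarrow> ind_coact lt u z \<in> induced lt e b"
proof -
  show "vzero \<in> induced lt e b"
    by (simp add: mem_induced_iff[of b, OF assms] induced_fun_def vzero_def)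
  show "vadd u v \<in> induced lt e b" if "u \<in> induced lt e b" "v \<in> induced lt e b"
  proof -
    have u: "induced_fun e b u" and v: "induced_fun e b v"
      using that by (simp_all add: mem_induced_iff[of b, OF assms])
    have "lt y x = e" if "vadd u v (y, x) \<noteq> 0" for y x
      using that induced_fun_support[OF u] induced_fun_support[OF v] by (force simp: vadd_def)
    moreover have "vadd u v (h + y, x) = b h * vadd u v (y, x)" if "h \<in> stab lt e" for h y x
      using that induced_fun_equivariant[OF u] induced_fun_equivariant[OF v]
      by (simp add: vadd_def distrib_left)
    ultimately show ?thesis by (simp add: mem_induced_iff[of b, OF assms] induced_fun_def)
  qed
  show "vsc c u \<in> induced lt e b" if "u \<in> induced lt e b"
    using that by (simp add: mem_induced_iff[of b, OF assms] induced_fun_def vsc_def mult.left_commute)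
  show "ind_coact lt u z \<in> induced lt e b" if "u \<in> induced lt e b"
  proof -
    obtain g x where z: "z = (g, x)" by (cases z)
    have u: "induced_fun e b u" using that by (simp add: mem_induced_iff[of b, OF assms])
    then show ?thesis
      unfolding mem_induced_iff[of b, OF assms] z ind_coact_eq[OF induced_fun_finite_support[OF u]]
      by (auto simp: induced_fun_def add.assoc)
  qed
qed

lemma induced_finite_support: "X \<in> induced lt e b \<Longrightarrow> finite {p. X p \<noteq> 0}"
  by (simp add: induced_def)

lemma ind_coact_vadd:
  assumes "finite {p. X p \<noteq> 0}" "finite {p. Y p \<noteq> 0}"
  shows "ind_coact lt (vadd X Y) z = vadd (ind_coact lt X z) (ind_coact lt Y z)"
proof -
  have "finite {p. vadd X Y p \<noteq> 0}"
    by (rule finite_subset[OF _ finite_UnI[OF assms]]) (auto simp: vadd_def)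
  then show ?thesis
    using assms by (cases z) (auto simp: ind_coact_eq vadd_def)
qed

lemma ind_coact_vsc:
  assumes "finite {p. X p \<noteq> 0}"
  shows "ind_coact lt (vsc c X) z = vsc c (ind_coact lt X z)"
proof -
  have "finite {p. vsc c X p \<noteq> 0}"
    by (rule finite_subset[OF _ assms]) (auto simp: vsc_def)
  then show ?thesis
    using assms by (cases z) (auto simp: ind_coact_eq vsc_def)
qed

lemma ind_coact_stab:
  assumes X: "induced_fun e b X" and h: "h \<in> stab lt e" and "lt h z = z"
  shows "ind_coact lt X (h, z) = vsc (b h) (ind_coact lt X (0, z))"
  using assms induced_fun_equivariant[OF X h]
  by (auto simp: ind_coact_eq[OF induced_fun_finite_support[OF X]] vsc_def add.commute)

(* The b-twisted average over G_e of v (x) e (x) p_g # (-g) |> e. *)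
definition ind_basis :: "'f \<Rightarrow> ('g \<Rightarrow> 'k::field) \<Rightarrow> 'g \<Rightarrow> 'g \<times> 'f \<Rightarrow> 'k" where
  "ind_basis e b g = (\<lambda>(y, x). if x = lt (- y) e \<and> y - g \<in> stab lt e then b (y - g) else 0)"

lemma character_stab_inverse:
  "character_on (stab lt e) b \<Longrightarrow> h \<in> stab lt e \<Longrightarrow> b h * b (- h) = 1"
  unfolding character_on_def by (metis add.right_inverse uminus_mem_stab_iff)

lemma act_uminus_add_stab: "h \<in> stab lt e \<Longrightarrow> lt (- (h + y)) e = lt (- y) e"
  by (rule act_eq_if_diff_mem_stab) (simp add: algebra_simps)

lemma induced_fun_ind_basis:
  assumes b: "character_on (stab lt e) b"
  shows "induced_fun e b (ind_basis e b g)"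
  unfolding induced_fun_def
proof (intro conjI allI ballI impI)
  fix y x assume "ind_basis e b g (y, x) \<noteq> 0"
  then show "lt y x = e" by (auto simp: ind_basis_def split: if_splits)
next
  fix h y x assume h: "h \<in> stab lt e"
  have idx: "h + y - g = h + (y - g)" by (simp add: algebra_simps)
  have "b (h + (y - g)) = b h * b (y - g)" if "y - g \<in> stab lt e"
    using b h that by (simp add: character_on_def)
  then show "ind_basis e b g (h + y, x) = b h * ind_basis e b g (y, x)"
    unfolding ind_basis_def prod.case idx act_uminus_add_stab[OF h] add_mem_stab_iff[OF h] by simp
qed

lemma ind_basis_add_stab:
  assumes b: "character_on (stab lt e) b" and h: "h \<in> stab lt e"
  shows "ind_basis e b (h + g) = vsc (b (- h)) (ind_basis e b g)"
proof (intro ext, clarify)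
  fix y x
  have idx: "y - (h + g) = - h + (y - g)" by (simp add: algebra_simps)
  have "b (- h + (y - g)) = b (- h) * b (y - g)" if "y - g \<in> stab lt e"
    using b h that uminus_mem_stab_iff[of h e] unfolding character_on_def by blast
  moreover have "- h + (y - g) \<in> stab lt e \<longleftrightarrow> y - g \<in> stab lt e"
    using add_mem_stab_iff[of "- h" e] h by simp
  ultimately show "ind_basis e b (h + g) (y, x) = vsc (b (- h)) (ind_basis e b g) (y, x)"
    unfolding ind_basis_def vsc_def prod.case idx by simp
qed

lemma card_stab_smult_eq_sum:
  assumes b: "character_on (stab lt e) b" and X: "induced_fun e b X"
  shows "of_nat (card (stab lt e)) * X (y, x) = (\<Sum>g\<in>UNIV. X (g, lt (- g) e) * ind_basis e b g (y, x))"
proof (cases "x = lt (- y) e")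
  case False
  then have "X (y, x) = 0" using induced_fun_support[OF X] by (auto simp: act_eq_iff)
  then show ?thesis using False by (simp add: ind_basis_def)
next
  case True
  have summand: "X (g, lt (- g) e) * ind_basis e b g (y, x) = (if y - g \<in> stab lt e then X (y, x) else 0)"
    for g
  proof (cases "y - g \<in> stab lt e")
    case h: True
    have "lt (- g) e = x" unfolding True by (rule act_eq_if_diff_mem_stab) (simp add: h)
    moreover have "X (y, x) = b (y - g) * X (g, x)"
      using induced_fun_equivariant[OF X h, of g x] by simp
    ultimately show ?thesis using h True by (simp add: ind_basis_def mult.commute)
  qed (simp add: ind_basis_def)
  have "(\<Sum>g\<in>UNIV. X (g, lt (- g) e) * ind_basis e b g (y, x))
      = of_nat (card {g. y - g \<in> stab lt e}) * X (y, x)"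
    by (simp add: summand sum.If_cases Int_def)
  then show ?thesis by (simp add: card_preimage_diff_left)
qed

lemma ind_coact_ind_basis:
  assumes b: "character_on (stab lt e) b"
  shows "ind_coact lt (ind_basis e b g) (- g', - lt g' z) =
    (if - z = lt (- (g + g')) e then ind_basis e b (g + g') else vzero)"
proof (intro ext, clarify)
  fix y x
  note fin = induced_fun_finite_support[OF induced_fun_ind_basis[OF b]]
  have idx: "y + - g' - g = y - (g + g')" by simp
  have "lt (- (y + - g')) e = lt g' (lt (- y) e)" by (simp add: algebra_simps)
  then have orbit: "- lt g' z = lt (- (y + - g')) e \<longleftrightarrow> - z = lt (- y) e"
    using act_inject[of g' "- z" "lt (- y) e"] by simp
  show "ind_coact lt (ind_basis e b g) (- g', - lt g' z) (y, x) =
      (if - z = lt (- (g + g')) e then ind_basis e b (g + g') else vzero) (y, x)"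
  proof (cases "y - (g + g') \<in> stab lt e")
    case True
    then have "lt (- y) e = lt (- (g + g')) e"
      using uminus_mem_stab_iff[of "y - (g + g')" e]
      by (intro act_eq_if_diff_mem_stab) (simp add: algebra_simps)
    then show ?thesis
      using True unfolding ind_coact_eq[OF fin] prod.case
      unfolding ind_basis_def prod.case idx orbit
      by (simp add: vzero_def)
  next
    case False
    then show ?thesis
      unfolding ind_coact_eq[OF fin] prod.case
      unfolding ind_basis_def prod.case idx
      by (simp add: vzero_def)
  qed
qed

section \<open>The dual of an induced comodule\<close>

lemma character_on_stab_uminus:
  "character_on (stab lt e) b \<Longrightarrow> character_on (stab lt (- e)) (\<lambda>g. b (- g))"
  using character_on_uminus[of "stab lt e" b] by simp

definition dual_to_induced :: "'f \<Rightarrow> ('g \<Rightarrow> 'k::field) \<Rightarrow> (('g \<times> 'f \<Rightarrow> 'k) \<Rightarrow> 'k) \<Rightarrow> 'g \<times> 'f \<Rightarrow> 'k" where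
  "dual_to_induced e b \<phi> = (\<lambda>(g, x). if x = lt (- g) (- e) then \<phi> (ind_basis e b g) else 0)"

(* The inverse of dual_to_induced comes from the perfect pairing
   |G_e|^-1 * sum_g X (g, (-g) |> e) * Y (g, (-g) |> (-e)); its summands are constant on G_e-cosets. *)
definition induced_to_dual :: "'f \<Rightarrow> ('g \<Rightarrow> 'k::field) \<Rightarrow> ('g \<times> 'f \<Rightarrow> 'k) \<Rightarrow> ('g \<times> 'f \<Rightarrow> 'k) \<Rightarrow> 'k" where
  "induced_to_dual e b Y = (\<lambda>X. if X \<in> induced lt e b then
     (\<Sum>g\<in>UNIV. X (g, lt (- g) e) * Y (g, lt (- g) (- e))) / of_nat (card (stab lt e)) else 0)"

lemma of_nat_card_stab_nonzero: "of_nat (card (stab lt e)) \<noteq> (0 :: 'k::field_char_0)"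
proof -
  have "stab lt e \<noteq> {}" using zero_mem_stab by blast
  then show ?thesis by (simp add: card_eq_0_iff)
qed

lemma ind_basis_mem_induced:
  "character_on (stab lt e) b \<Longrightarrow> ind_basis e b g \<in> induced lt e b"
  by (simp add: induced_fun_ind_basis character_mem_induced_iff)

lemma dual_to_induced_mem:
  assumes b: "character_on (stab lt e) b" and \<phi>: "\<phi> \<in> dual_space (induced lt e b)"
  shows "dual_to_induced e b \<phi> \<in> induced lt (- e) (\<lambda>g. b (- g))"
proof -
  have lin: "functional_on (induced lt e b) \<phi>" using \<phi> by (simp add: dual_space_def)
  note basis = ind_basis_mem_induced[OF b]
  have "induced_fun (- e) (\<lambda>g. b (- g)) (dual_to_induced e b \<phi>)"
    unfolding induced_fun_def
  proof (intro conjI allI ballI impI)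
    fix y x assume "dual_to_induced e b \<phi> (y, x) \<noteq> 0"
    then have "x = lt (- y) (- e)" by (auto simp: dual_to_induced_def split: if_splits)
    then show "lt y x = - e" by (simp del: act_uminus)
  next
    fix h y x assume "h \<in> stab lt (- e)"
    then have h: "h \<in> stab lt e" by simp
    have "\<phi> (ind_basis e b (h + y)) = b (- h) * \<phi> (ind_basis e b y)"
      unfolding ind_basis_add_stab[OF b h] using lin basis unfolding functional_on_def by blast
    then show "dual_to_induced e b \<phi> (h + y, x) = b (- h) * dual_to_induced e b \<phi> (y, x)"
      unfolding dual_to_induced_def prod.case act_uminus_add_stab[OF \<open>h \<in> stab lt (- e)\<close>] by simp
  qed
  then show ?thesis
    by (simp add: character_mem_induced_iff[OF character_on_stab_uminus[OF b]])
qed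

lemma induced_to_dual_mem:
  assumes b: "b 0 = 1"
  shows "induced_to_dual e b Y \<in> dual_space (induced lt e b)"
proof -
  note closed = induced_closed[of b, OF b]
  have "functional_on (induced lt e b) (induced_to_dual e b Y)"
    unfolding functional_on_def induced_to_dual_def
    using closed by (auto simp: vadd_def vsc_def sum.distrib distrib_right sum_distrib_left
        add_divide_distrib mult.assoc)
  then show ?thesis by (simp add: dual_space_def induced_to_dual_def)
qed

lemma induced_to_dual_dual_to_induced:
  assumes b: "character_on (stab lt e) b" and \<phi>: "\<phi> \<in> dual_space (induced lt e b)"
  shows "induced_to_dual e b (dual_to_induced e b \<phi>) = (\<phi> :: _ \<Rightarrow> 'k::field_char_0)"
proof
  fix X
  have lin: "functional_on (induced lt e b) \<phi>" and outside: "\<forall>m. m \<notin> induced lt e b \<longrightarrow> \<phi> m = 0"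
    using \<phi> by (auto simp: dual_space_def)
  note closed = induced_closed[of b, OF character_on_zero[OF b]]
  show "induced_to_dual e b (dual_to_induced e b \<phi>) X = \<phi> X"
  proof (cases "X \<in> induced lt e b")
    case False
    then show ?thesis using outside by (simp add: induced_to_dual_def)
  next
    case True
    then have X: "induced_fun e b X" by (simp add: character_mem_induced_iff[OF b])
    let ?n = "of_nat (card (stab lt e)) :: 'k"
    have "(\<Sum>g\<in>UNIV. X (g, lt (- g) e) * \<phi> (ind_basis e b g))
        = \<phi> (\<lambda>p. \<Sum>g\<in>UNIV. X (g, lt (- g) e) * ind_basis e b g p)"
      using functional_on_sum[OF lin closed(1) _ _ finite_UNIV, of "ind_basis e b"]
        closed(2,3) ind_basis_mem_induced[OF b] by simp
    also have "(\<lambda>p. \<Sum>g\<in>UNIV. X (g, lt (- g) e) * ind_basis e b g p) = vsc ?n X"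
      using card_stab_smult_eq_sum[OF b X] by (auto simp: vsc_def)
    also have "\<phi> (vsc ?n X) = ?n * \<phi> X"
      using lin True unfolding functional_on_def by blast
    finally show ?thesis
      using True of_nat_card_stab_nonzero[of e] by (simp add: induced_to_dual_def dual_to_induced_def)
  qed
qed

lemma dual_to_induced_induced_to_dual:
  assumes b: "character_on (stab lt e) b" and Y: "Y \<in> induced lt (- e) (\<lambda>g. b (- g))"
  shows "dual_to_induced e b (induced_to_dual e b Y) = (Y :: _ \<Rightarrow> 'k::field_char_0)"
proof (intro ext, clarify)
  fix g x
  have Y: "induced_fun (- e) (\<lambda>g. b (- g)) Y"
    using Y by (simp add: character_mem_induced_iff[OF character_on_stab_uminus[OF b]])
  show "dual_to_induced e b (induced_to_dual e b Y) (g, x) = Y (g, x)"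
  proof (cases "x = lt (- g) (- e)")
    case False
    then have "Y (g, x) = 0"
      using induced_fun_support[OF Y] by (auto simp: act_eq_iff simp del: act_uminus)
    then show ?thesis using False by (simp add: dual_to_induced_def)
  next
    case True
    have summand: "ind_basis e b g (y, lt (- y) e) * Y (y, lt (- y) (- e)) =
        (if y - g \<in> stab lt e then Y (g, x) else 0)" for y
    proof (cases "y - g \<in> stab lt e")
      case h: True
      have "lt (- y) (- e) = x"
        unfolding True by (rule act_eq_if_diff_mem_stab) (use h uminus_mem_stab_iff[of "y - g" e] in simp)
      moreover have "Y (y, x) = b (- (y - g)) * Y (g, x)"
        using induced_fun_equivariant[OF Y, of "y - g" g x] h by simp
      ultimately show ?thesis
        using h character_stab_inverse[OF b h]
        by (simp add: ind_basis_def mult.assoc del: act_uminus minus_diff_eq)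
    qed (simp add: ind_basis_def)
    have "(\<Sum>y\<in>UNIV. ind_basis e b g (y, lt (- y) e) * Y (y, lt (- y) (- e)))
        = of_nat (card {y. y - g \<in> stab lt e}) * Y (g, x)"
      by (simp only: summand) (simp add: sum.If_cases Int_def)
    then show ?thesis
      using True ind_basis_mem_induced[OF b] of_nat_card_stab_nonzero[of e]
      by (simp add: dual_to_induced_def induced_to_dual_def card_preimage_diff_right del: act_uminus)
  qed
qed

lemma dual_coact_eq:
  assumes lin: "functional_on M \<phi>" and zero: "vzero \<in> M" and m: "m \<in> M"
  shows "dual_coact lt rt M c \<phi> (g, z) m = \<phi> (c m (- g, - lt g z))"
proof -
  let ?p = "(- g, - lt g z)"
  let ?S = "{p. antipode_idx lt rt p = (g, z) \<and> c m p \<noteq> vzero}"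
  have "antipode_idx lt rt p = (g, z) \<longleftrightarrow> p = ?p" for p
    by (cases p) (auto simp: antipode_idx_def rt_trivial act_eq_iff)
  then have "?S = (if c m ?p = vzero then {} else {?p})" by auto
  then show ?thesis
    using m functional_on_vzero[OF lin zero] by (simp add: dual_coact_def)
qed

lemma dual_to_induced_coact:
  assumes b: "character_on (stab lt e) b" and \<phi>: "\<phi> \<in> dual_space (induced lt e b)"
  shows "ind_coact lt (dual_to_induced e b \<phi>) z =
    dual_to_induced e b (dual_coact lt rt (induced lt e b) (ind_coact lt) \<phi> z)"
proof (intro ext, clarify)
  fix g x
  obtain g' z' where z: "z = (g', z')" by (cases z)
  have lin: "functional_on (induced lt e b) \<phi>" using \<phi> by (simp add: dual_space_def)
  note closed = induced_closed[of b, OF character_on_zero[OF b]]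
  have fin: "finite {p. dual_to_induced e b \<phi> p \<noteq> 0}"
    using dual_to_induced_mem[OF b \<phi>] character_mem_induced_iff[OF character_on_stab_uminus[OF b]]
      induced_fun_finite_support by blast
  have orbit: "z' = lt (- (g + g')) (- e) \<longleftrightarrow> - z' = lt (- (g + g')) e"
    by (metis act_uminus minus_minus)
  have "z' = lt (- (g + g')) (- e) \<Longrightarrow> lt g' z' = lt (- g) (- e)"
    by (simp add: algebra_simps del: act_uminus)
  then show "ind_coact lt (dual_to_induced e b \<phi>) z (g, x) =
      dual_to_induced e b (dual_coact lt rt (induced lt e b) (ind_coact lt) \<phi> z) (g, x)"
    unfolding z ind_coact_eq[OF fin]
    using orbit functional_on_vzero[OF lin closed(1)]
    by (auto simp: dual_to_induced_def dual_coact_eq[OF lin closed(1) ind_basis_mem_induced[OF b]]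
        ind_coact_ind_basis[OF b] simp del: act_uminus)
qed

lemma dual_coact_mem_dual_space:
  assumes b: "b 0 = 1" and \<phi>: "\<phi> \<in> dual_space (induced lt e b)"
  shows "dual_coact lt rt (induced lt e b) (ind_coact lt) \<phi> z \<in> dual_space (induced lt e b)"
proof -
  obtain g z' where z: "z = (g, z')" by (cases z)
  have lin: "functional_on (induced lt e b) \<phi>" using \<phi> by (simp add: dual_space_def)
  note closed = induced_closed[of b, OF b]
  note fin = induced_finite_support
  note coact = dual_coact_eq[OF lin closed(1)]
  have "functional_on (induced lt e b) (dual_coact lt rt (induced lt e b) (ind_coact lt) \<phi> z)"
    unfolding functional_on_def z
  proof (intro conjI ballI allI)
    fix u v assume u: "u \<in> induced lt e b" and v: "v \<in> induced lt e b"
    then show "dual_coact lt rt (induced lt e b) (ind_coact lt) \<phi> (g, z') (vadd u v) =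
        dual_coact lt rt (induced lt e b) (ind_coact lt) \<phi> (g, z') u +
        dual_coact lt rt (induced lt e b) (ind_coact lt) \<phi> (g, z') v"
      using lin closed(4) unfolding functional_on_def
      by (simp add: coact[OF u] coact[OF v] coact[OF closed(2)[OF u v]] ind_coact_vadd[OF fin fin])
  next
    fix c u assume u: "u \<in> induced lt e b"
    then show "dual_coact lt rt (induced lt e b) (ind_coact lt) \<phi> (g, z') (vsc c u) =
        c * dual_coact lt rt (induced lt e b) (ind_coact lt) \<phi> (g, z') u"
      using lin closed(4) unfolding functional_on_def
      by (simp add: coact[OF u] coact[OF closed(3)[OF u]] ind_coact_vsc[OF fin])
  qed
  then show ?thesis by (simp add: dual_space_def dual_coact_def)
qed

lemma dual_induced_iso:
  assumes b: "character_on (stab lt e) (b :: 'g \<Rightarrow> 'k::field_char_0)"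
  shows "comod_iso (dual_space (induced lt e b)) (dual_coact lt rt (induced lt e b) (ind_coact lt))
    (induced lt (- e) (\<lambda>g. b (- g))) (ind_coact lt)"
  unfolding comod_iso_def
proof (intro exI conjI)
  show "linear_on (dual_space (induced lt e b)) (dual_to_induced e b)"
    by (auto simp: linear_on_def dual_to_induced_def vadd_def vsc_def fun_eq_iff)
  show "bij_betw (dual_to_induced e b) (dual_space (induced lt e b)) (induced lt (- e) (\<lambda>g. b (- g)))"
    by (rule bij_betw_byWitness[where f' = "induced_to_dual e b"])
      (use induced_to_dual_dual_to_induced[OF b] dual_to_induced_induced_to_dual[OF b]
        dual_to_induced_mem[OF b] induced_to_dual_mem[of b, OF character_on_zero[OF b]] in auto)
  show "\<forall>\<phi>\<in>dual_space (induced lt e b). \<forall>z. ind_coact lt (dual_to_induced e b \<phi>) z =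
      dual_to_induced e b (dual_coact lt rt (induced lt e b) (ind_coact lt) \<phi> z)"
    using dual_to_induced_coact[OF b] by blast
qed

section \<open>Isomorphisms between induced comodules\<close>

definition translate :: "'g \<Rightarrow> ('g \<times> 'f \<Rightarrow> 'k) \<Rightarrow> 'g \<times> 'f \<Rightarrow> 'k" where
  "translate g X = (\<lambda>(y, x). X (y - g, x))"

lemma translate_uminus_translate [simp]: "translate (- g) (translate g X) = X"
  by (simp add: translate_def)

lemma translate_translate_uminus [simp]: "translate g (translate (- g) X) = X"
  by (simp add: translate_def)

lemma induced_fun_translate:
  assumes X: "induced_fun e b X"
  shows "induced_fun (lt g e) b (translate g X)"
  unfolding induced_fun_def stab_act
proof (intro conjI allI ballI impI)
  fix y x assume "translate g X (y, x) \<noteq> 0"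
  then have "lt (y - g) x = e" using induced_fun_support[OF X] by (simp add: translate_def)
  then show "lt y x = lt g e" using act_act[of g "y - g" x] by simp
next
  fix h y x assume "h \<in> stab lt e"
  then show "translate g X (h + y, x) = b h * translate g X (y, x)"
    using induced_fun_equivariant[OF X, of h "y - g" x] by (simp add: translate_def algebra_simps)
qed

lemma induced_translate_iso:
  assumes b: "character_on (stab lt e) b"
  shows "comod_iso (induced lt e b) (ind_coact lt) (induced lt (lt g e) b) (ind_coact lt)"
  unfolding comod_iso_def
proof (intro exI conjI)
  have b': "character_on (stab lt (lt g e)) b" using b by (simp add: stab_act)
  note iff = character_mem_induced_iff[OF b] character_mem_induced_iff[OF b']
  show "linear_on (induced lt e b) (translate g)"
    by (auto simp: linear_on_def translate_def vadd_def vsc_def)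
  have "induced_fun e b (translate (- g) X)" if "induced_fun (lt g e) b X" for X
    using induced_fun_translate[OF that, of "- g"] by simp
  then show "bij_betw (translate g) (induced lt e b) (induced lt (lt g e) b)"
    by (intro bij_betw_byWitness[where f' = "translate (- g)"]) (auto simp: iff induced_fun_translate)
  show "\<forall>X\<in>induced lt e b. \<forall>z. ind_coact lt (translate g X) z = translate g (ind_coact lt X z)"
  proof (intro ballI allI)
    fix X and z :: "'g \<times> 'f" assume "X \<in> induced lt e b"
    then have X: "induced_fun e b X" by (simp add: iff)
    obtain g' z' where z: "z = (g', z')" by (cases z)
    show "ind_coact lt (translate g X) z = translate g (ind_coact lt X z)"
      unfolding z ind_coact_eq[OF induced_fun_finite_support[OF X]]
        ind_coact_eq[OF induced_fun_finite_support[OF induced_fun_translate[OF X]]]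
      by (auto simp: translate_def algebra_simps)
  qed
qed

lemma induced_isoD:
  assumes a: "character_on (stab lt e) a" and b: "character_on (stab lt e') b"
    and iso: "comod_iso (induced lt e a) (ind_coact lt) (induced lt e' b) (ind_coact lt)"
  shows "(\<exists>g. lt g e = e') \<and> (\<forall>h\<in>stab lt e. a h = b h)"
proof -
  obtain U where lin: "linear_on (induced lt e a) U"
    and bij: "bij_betw U (induced lt e a) (induced lt e' b)"
    and coact: "\<forall>X\<in>induced lt e a. \<forall>z. ind_coact lt (U X) z = U (ind_coact lt X z)"
    using iso unfolding comod_iso_def by blast
  let ?X = "ind_basis e a 0"
  let ?P = "ind_coact lt ?X (0, e)"
  have X: "induced_fun e a ?X" by (rule induced_fun_ind_basis[OF a])
  have X_mem: "?X \<in> induced lt e a" by (rule ind_basis_mem_induced[OF a])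
  have "?P (0, e) = 1"
    using character_on_zero[OF a] unfolding ind_coact_eq[OF induced_fun_finite_support[OF X]] prod.case
    by (simp add: ind_basis_def)
  then have "?P \<noteq> vzero" by (auto simp: vzero_def)
  then have UP: "U ?P \<noteq> vzero"
    using linear_bij_nonzero[OF lin _ bij] induced_closed[of a, OF character_on_zero[OF a]] X_mem
    by blast
  have Y: "induced_fun e' b (U ?X)"
    using bij X_mem character_mem_induced_iff[OF b] by (auto simp: bij_betw_def)
  have Y_coact: "ind_coact lt (U ?X) (0, e) = U ?P" using coact X_mem by blast
  then obtain p where "ind_coact lt (U ?X) (0, e) p \<noteq> 0" using UP by (auto simp: vzero_def fun_eq_iff)
  then obtain g where "U ?X (g, e) \<noteq> 0"
    by (cases p) (auto simp: ind_coact_eq[OF induced_fun_finite_support[OF Y]] split: if_splits)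
  then have orbit: "lt g e = e'" by (rule induced_fun_support[OF Y])
  have "a h = b h" if h: "h \<in> stab lt e" for h
  proof -
    have he: "lt h e = e" and h': "h \<in> stab lt e'" using h orbit stab_act[of g e] by (auto simp: stab_def)
    have "vsc (a h) (U ?P) = U (vsc (a h) ?P)"
      using lin coact X_mem induced_closed(4)[of a, OF character_on_zero[OF a] X_mem]
      unfolding linear_on_def by simp
    also have "\<dots> = U (ind_coact lt ?X (h, e))" by (simp add: ind_coact_stab[OF X h he])
    also have "\<dots> = ind_coact lt (U ?X) (h, e)" using coact X_mem by simp
    also have "\<dots> = vsc (b h) (U ?P)" by (simp add: ind_coact_stab[OF Y h' he] Y_coact)
    finally show "a h = b h" using vsc_right_cancel UP by blast
  qed
  with orbit show ?thesis by blast
qed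

lemma induced_isoI:
  assumes a: "character_on (stab lt e) a" and "lt g e = e'" and "\<forall>h\<in>stab lt e. a h = b h"
  shows "comod_iso (induced lt e a) (ind_coact lt) (induced lt e' b) (ind_coact lt)"
proof -
  have "stab lt e' = stab lt e" using \<open>lt g e = e'\<close> stab_act by blast
  then have "induced lt e' b = induced lt e' a"
    using assms(3) character_on_zero[OF a]
    by (auto simp: mem_induced_iff[of b] mem_induced_iff[of a] induced_fun_def)
  then show ?thesis using induced_translate_iso[OF a, of g] \<open>lt g e = e'\<close> by simp
qed

lemma induced_iso_iff:
  assumes "character_on (stab lt e) a" and "character_on (stab lt e') b"
  shows "comod_iso (induced lt e a) (ind_coact lt) (induced lt e' b) (ind_coact lt)
    \<longleftrightarrow> (\<exists>g. lt g e = e') \<and> (\<forall>h\<in>stab lt e. a h = b h)"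
  using induced_isoD[OF assms] induced_isoI[OF assms(1)] by blast

end

theorem proposition6p2:
  fixes lt :: "'g::{ab_group_add, finite} \<Rightarrow> 'f::group_add \<Rightarrow> 'f"
    and rt :: "'g \<Rightarrow> 'f \<Rightarrow> 'g"
    and f :: 'f
    and a :: "'g \<Rightarrow> 'k::field_char_0"
  assumes alg_closed: "\<forall>p :: 'k poly. degree p > 0 \<longrightarrow> (\<exists>x. poly p x = 0)"
    and mp: "matched_pair lt rt"
    and triv: "\<forall>g h. rt g h = g"
    and V: "is_kK_comod (stab lt f) (UNIV :: (unit \<Rightarrow> 'k) set) (char_coact (stab lt f) a)"
  shows "stab lt (- f) = stab lt f
    \<and> comod_iso (dual_space (induced lt f a)) (dual_coact lt rt (induced lt f a) (ind_coact lt))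
                (induced lt (- f) (\<lambda>g. a (- g))) (ind_coact lt)
    \<and> (comod_iso (induced lt f a) (ind_coact lt)
                 (dual_space (induced lt f a)) (dual_coact lt rt (induced lt f a) (ind_coact lt))
       \<longleftrightarrow> comod_iso (UNIV :: (unit \<Rightarrow> 'k) set) (char_coact (stab lt f) a)
                     (UNIV :: (unit \<Rightarrow> 'k) set) (char_coact (stab lt f) (\<lambda>g. a (- g)))
           \<and> {g. lt g f = - f} \<noteq> {})"
proof -
  interpret trivial_right_action lt rt
    using mp triv by unfold_locales auto
  let ?M = "induced lt f a" and ?N = "induced lt (- f) (\<lambda>g. a (- g))"
  let ?dual = "dual_coact lt rt ?M (ind_coact lt)"
  have a: "character_on (stab lt f) a"
    using character_on_char_coact[OF V zero_mem_stab] add_mem_stab by blast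
  have dual: "comod_iso (dual_space ?M) ?dual ?N (ind_coact lt)"
    by (rule dual_induced_iso[OF a])
  have "comod_iso ?M (ind_coact lt) (dual_space ?M) ?dual \<longleftrightarrow> comod_iso ?M (ind_coact lt) ?N (ind_coact lt)"
    using comod_iso_trans[OF _ dual]
      comod_iso_trans[OF _ comod_iso_sym[OF dual]] dual_space_vadd dual_space_vsc
      dual_coact_mem_dual_space[of a, OF character_on_zero[OF a]] by blast
  also have "\<dots> \<longleftrightarrow> (\<exists>g. lt g f = - f) \<and> (\<forall>h\<in>stab lt f. a h = a (- h))"
    by (rule induced_iso_iff[OF a character_on_stab_uminus[OF a]])
  also have "\<dots> \<longleftrightarrow> comod_iso (UNIV :: (unit \<Rightarrow> 'k) set) (char_coact (stab lt f) a)
      UNIV (char_coact (stab lt f) (\<lambda>g. a (- g))) \<and> {g. lt g f = - f} \<noteq> {}"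
    by (auto simp: comod_iso_char_coact_iff)
  finally show ?thesis using dual by simp
qed

end
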